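(* Let $r\in(0,1)$ and let $k\geq1$ be an integer. Let $W_1,W_2,\dots$ be i.i.d.\ copies of a positive random variable $W$ (an i.i.d.\ multiplicative cascade with scale ratio $r$) such that $\log W$ is infinitely divisible with L\'evy triplet $(a,\sigma^2,\nu)$, i.e.\ with cumulant generating function $$\psi(p)=\log\mathbb{E}[W^p]=ap+\frac{\sigma^2p^2}{2}+\int\bigl(e^{px}-1-px\,\mathbf{1}_{|x|\le1}\bigr)\,\nu(dx),$$ and define the scaling exponents $\zeta_p=\psi(p)/\ln r$ and incremental exponents $\delta_p=\zeta_{p+k}-\zeta_p=(\psi(p+k)-\psi(p))/\ln r$. Say that A1 holds with $\beta\in(0,1)$ if $\delta_\infty=\lim_{p\to\infty}\delta_p$ exists and is finite and $\delta_{p+k}=(1-\beta)\delta_\infty+\beta\delta_p$ for all $p\in k\mathbb{N}_0=\{0,k,2k,\dots\}$. Assume nontrivial intermittency, i.e.\ $C=(\delta_0-\delta_\infty)/(1-\beta)>0$. Then A1 holds with $\beta\in(0,1)$ if and only if $\sigma^2=0$ and $\nu=\lambda\delta_b$ (a point mass at $b$) for some $b<0$ and $\lambda>0$. That is, among cascades with log-infinitely-divisible generator, A1 selects exactly the log-Poisson class ($\log W=a'+bN$, $N\sim\mathrm{Poisson}(\lambda)$); no other log-infinitely-divisible cascade (log-normal, log-stable, or any other) satisfies A1.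
   Context: $\ln$ denotes the natural logarithm. The L\'evy measure $\nu$ has no atom at $0$. *)

theory Defs
  imports "HOL-Probability.Probability"
begin

definition levy_measure :: "real measure \<Rightarrow> bool" where
  "levy_measure \<nu> \<longleftrightarrow> sets \<nu> = sets borel \<and> emeasure \<nu> {0} = 0 \<and>
     (\<integral>\<^sup>+ x. ennreal (min 1 (x\<^sup>2)) \<partial>\<nu>) < \<infinity>"

definition lk_integrand :: "real \<Rightarrow> real \<Rightarrow> real" where
  "lk_integrand p x = exp (p * x) - 1 - p * x * indicator {x. \<bar>x\<bar> \<le> 1} x"

text \<open>Cumulant generating function psi(p) = log E[W^p] of W with log W infinitely
  divisible with Levy triplet (a, sigma^2, nu).\<close>
definition levy_cgf :: "real \<Rightarrow> real \<Rightarrow> real measure \<Rightarrow> real \<Rightarrow> real" where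
  "levy_cgf a s2 \<nu> p = a * p + s2 * p\<^sup>2 / 2 + (\<integral> x. lk_integrand p x \<partial>\<nu>)"

definition zeta :: "real \<Rightarrow> real \<Rightarrow> real \<Rightarrow> real measure \<Rightarrow> real \<Rightarrow> real" where
  "zeta r a s2 \<nu> p = levy_cgf a s2 \<nu> p / ln r"

definition delta :: "real \<Rightarrow> nat \<Rightarrow> real \<Rightarrow> real \<Rightarrow> real measure \<Rightarrow> real \<Rightarrow> real" where
  "delta r k a s2 \<nu> p = zeta r a s2 \<nu> (p + real k) - zeta r a s2 \<nu> p"

definition A1 :: "real \<Rightarrow> nat \<Rightarrow> real \<Rightarrow> real \<Rightarrow> real measure \<Rightarrow> real \<Rightarrow> real \<Rightarrow> bool" where
  "A1 r k a s2 \<nu> \<beta> dinf \<longleftrightarrow>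
     ((delta r k a s2 \<nu>) \<longlongrightarrow> dinf) at_top \<and>
     (\<forall>n::nat. delta r k a s2 \<nu> (real (n * k) + real k)
               = (1 - \<beta>) * dinf + \<beta> * delta r k a s2 \<nu> (real (n * k)))"

end

theory Submission imports Defs begin

text \<open>Write \<open>E\<close> for the shift \<open>p \<mapsto> p + k\<close> and \<open>\<psi>\<close> for the cumulant generating function.
  Since \<open>ln r \<cdot> \<delta> = (E - 1)\<psi>\<close>, assumption A1 says that \<open>(E - 1)(E - \<beta>)\<psi>\<close> is constant on \<open>k\<nat>\<^sub>0\<close>,
  so \<open>(E - 1)\<^sup>2(E - \<beta>)\<^sup>2\<psi>\<close> vanishes at \<open>p = 0\<close>. This operator kills the drift and turns the Gaussian
  part into \<open>\<sigma>\<^sup>2k\<^sup>2(1 - \<beta>)\<^sup>2\<close> and the jump part into the \<open>\<nu>\<close>-integral of \<open>(e\<^sup>k\<^sup>x - 1)\<^sup>2(e\<^sup>k\<^sup>x - \<beta>)\<^sup>2\<close>;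
  squaring \<open>E - \<beta>\<close> is what makes this integrand nonnegative. Hence \<open>\<sigma> = 0\<close> and \<open>\<nu>\<close>, having no atom
  at \<open>0\<close>, is concentrated on \<open>b = ln \<beta> / k\<close>. The mass at \<open>b\<close> is positive because \<open>(E - 1)\<^sup>2\<psi>\<close> at \<open>0\<close>
  equals \<open>ln r (\<beta> - 1)(\<delta>\<^sub>0 - \<delta>\<^sub>\<infinity>) > 0\<close>. Conversely, for \<open>\<nu> = \<lambda>\<delta>\<^sub>b\<close> one has
  \<open>\<delta>\<^sub>p = \<delta>\<^sub>\<infinity> + C e\<^sup>p\<^sup>b\<close>, which satisfies A1 with \<open>\<beta> = e\<^sup>k\<^sup>b\<close>.\<close>

lemma lk_integrand_measurable [measurable]: "lk_integrand p \<in> borel_measurable borel"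
  unfolding lk_integrand_def by measurable

lemma lk_integrand_zero [simp]: "lk_integrand 0 x = 0"
  by (simp add: lk_integrand_def)

lemma levy_cgf_zero [simp]: "levy_cgf a s \<nu> 0 = 0"
  by (simp add: levy_cgf_def)

lemma lk_integrand_of_nat_mult:
  "lk_integrand (real j * p) x = exp (p * x) ^ j - 1 - real j * (p * x * indicator {x. \<bar>x\<bar> \<le> 1} x)"
  by (simp add: lk_integrand_def exp_of_nat_mult[symmetric] mult_ac)

lemma lk_integrand_second_difference:
  "lk_integrand (2 * p) x - 2 * lk_integrand p x = (exp (p * x) - 1)\<^sup>2"
  using lk_integrand_of_nat_mult[of 2 p x] lk_integrand_of_nat_mult[of 1 p x]
  by (simp add: power2_eq_square algebra_simps)

lemma lk_integrand_fourth_combination: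
  "lk_integrand (4 * p) x - (2 + 2 * \<beta>) * lk_integrand (3 * p) x
     + (1 + 4 * \<beta> + \<beta>\<^sup>2) * lk_integrand (2 * p) x - (2 * \<beta> + 2 * \<beta>\<^sup>2) * lk_integrand p x
   = (exp (p * x) - 1)\<^sup>2 * (exp (p * x) - \<beta>)\<^sup>2"
proof -
  define t where "t = p * x * indicator {x. \<bar>x\<bar> \<le> 1} x"
  have expand: "lk_integrand (real j * p) x = exp (p * x) ^ j - 1 - real j * t" for j
    by (simp add: lk_integrand_of_nat_mult t_def)
  have "lk_integrand p x = exp (p * x) - 1 - t"
    using expand[of 1] by simp
  moreover have "lk_integrand (2 * p) x = exp (p * x) ^ 2 - 1 - 2 * t"
    using expand[of 2] by simp
  moreover have "lk_integrand (3 * p) x = exp (p * x) ^ 3 - 1 - 3 * t"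
    using expand[of 3] by simp
  moreover have "lk_integrand (4 * p) x = exp (p * x) ^ 4 - 1 - 4 * t"
    using expand[of 4] by simp
  ultimately show ?thesis
    by algebra
qed

lemma levy_cgf_second_difference:
  assumes "integrable \<nu> (lk_integrand p)" "integrable \<nu> (lk_integrand (2 * p))"
  shows "levy_cgf a s \<nu> (2 * p) - 2 * levy_cgf a s \<nu> p = s * p\<^sup>2 + (\<integral>x. (exp (p * x) - 1)\<^sup>2 \<partial>\<nu>)"
proof -
  have "(\<integral>x. (exp (p * x) - 1)\<^sup>2 \<partial>\<nu>) = (\<integral>x. lk_integrand (2 * p) x - 2 * lk_integrand p x \<partial>\<nu>)"
    by (simp add: lk_integrand_second_difference)
  also have "\<dots> = (\<integral>x. lk_integrand (2 * p) x \<partial>\<nu>) - 2 * (\<integral>x. lk_integrand p x \<partial>\<nu>)"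
    using assms by simp
  finally show ?thesis
    by (simp add: levy_cgf_def power2_eq_square algebra_simps)
qed

lemma levy_cgf_fourth_combination:
  assumes "\<And>j::nat. j \<in> {1..4} \<Longrightarrow> integrable \<nu> (lk_integrand (real j * p))"
  shows "levy_cgf a s \<nu> (4 * p) - (2 + 2 * \<beta>) * levy_cgf a s \<nu> (3 * p)
           + (1 + 4 * \<beta> + \<beta>\<^sup>2) * levy_cgf a s \<nu> (2 * p) - (2 * \<beta> + 2 * \<beta>\<^sup>2) * levy_cgf a s \<nu> p
         = s * p\<^sup>2 * (1 - \<beta>)\<^sup>2 + (\<integral>x. (exp (p * x) - 1)\<^sup>2 * (exp (p * x) - \<beta>)\<^sup>2 \<partial>\<nu>)"
proof -
  have "integrable \<nu> (lk_integrand p)" "integrable \<nu> (lk_integrand (2 * p))"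
    "integrable \<nu> (lk_integrand (3 * p))" "integrable \<nu> (lk_integrand (4 * p))"
    using assms[of 1] assms[of 2] assms[of 3] assms[of 4] by simp_all
  then have jumps: "(\<integral>x. (exp (p * x) - 1)\<^sup>2 * (exp (p * x) - \<beta>)\<^sup>2 \<partial>\<nu>)
      = (\<integral>x. lk_integrand (4 * p) x \<partial>\<nu>) - (2 + 2 * \<beta>) * (\<integral>x. lk_integrand (3 * p) x \<partial>\<nu>)
        + (1 + 4 * \<beta> + \<beta>\<^sup>2) * (\<integral>x. lk_integrand (2 * p) x \<partial>\<nu>)
        - (2 * \<beta> + 2 * \<beta>\<^sup>2) * (\<integral>x. lk_integrand p x \<partial>\<nu>)"
    by (simp add: lk_integrand_fourth_combination[symmetric])
  show ?thesis
    unfolding levy_cgf_def jumps by (simp add: power2_eq_square field_simps)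
qed

lemma A1_cgf_combinations:
  assumes "ln r \<noteq> 0" and "A1 r k a s \<nu> \<beta> dinf"
  defines "\<psi> \<equiv> levy_cgf a s \<nu>" and "K \<equiv> real k"
  shows "\<psi> (2 * K) - 2 * \<psi> K = ln r * (\<beta> - 1) * (delta r k a s \<nu> 0 - dinf)"
    and "\<psi> (4 * K) - (2 + 2 * \<beta>) * \<psi> (3 * K) + (1 + 4 * \<beta> + \<beta>\<^sup>2) * \<psi> (2 * K)
           - (2 * \<beta> + 2 * \<beta>\<^sup>2) * \<psi> K = 0"
proof -
  define D where "D = delta r k a s \<nu>"
  have step: "\<psi> (p + K) - \<psi> p = ln r * D p" for p
    using assms(1) by (simp add: D_def delta_def zeta_def \<psi>_def K_def field_simps)
  have rec: "D (real n * K + K) = (1 - \<beta>) * dinf + \<beta> * D (real n * K)" for n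
    using assms(2) by (simp add: A1_def D_def K_def)
  define Q where "Q p = \<psi> (p + 2 * K) - (1 + \<beta>) * \<psi> (p + K) + \<beta> * \<psi> p" for p
  have Q: "Q (real n * K) = ln r * (1 - \<beta>) * dinf" for n
  proof -
    have "\<psi> (real n * K + 2 * K) - \<psi> (real n * K + K) = ln r * D (real n * K + K)"
      using step[of "real n * K + K"] by (simp add: add.assoc)
    moreover have "\<psi> (real n * K + K) - \<psi> (real n * K) = ln r * D (real n * K)"
      using step[of "real n * K"] .
    ultimately show ?thesis
      unfolding Q_def rec by (simp add: algebra_simps)
  qed
  show "\<psi> (2 * K) - 2 * \<psi> K = ln r * (\<beta> - 1) * (delta r k a s \<nu> 0 - dinf)"
  proof -
    have "\<psi> (2 * K) - \<psi> K = ln r * D K"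
      using step[of K] by simp
    then show ?thesis
      using step[of 0] unfolding rec[of 0, simplified] by (simp add: D_def \<psi>_def algebra_simps)
  qed
  show "\<psi> (4 * K) - (2 + 2 * \<beta>) * \<psi> (3 * K) + (1 + 4 * \<beta> + \<beta>\<^sup>2) * \<psi> (2 * K)
          - (2 * \<beta> + 2 * \<beta>\<^sup>2) * \<psi> K = 0"
  proof -
    have Q_values: "Q 0 = ln r * (1 - \<beta>) * dinf" "Q K = ln r * (1 - \<beta>) * dinf"
      "Q (2 * K) = ln r * (1 - \<beta>) * dinf"
      using Q[of 0] Q[of 1] Q[of 2] by simp_all
    have "Q (2 * K) - (1 + \<beta>) * Q K + \<beta> * Q 0 = 0"
      unfolding Q_values by (simp add: algebra_simps)
    then show ?thesis
      by (simp add: Q_def \<psi>_def power2_eq_square algebra_simps)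
  qed
qed

lemma integral_scaled_return:
  fixes f :: "real \<Rightarrow> real"
  assumes "lam \<ge> 0" "f \<in> borel_measurable borel"
  shows "(\<integral>x. f x \<partial>scale_measure (ennreal lam) (return borel b)) = lam * f b"
proof -
  have "scale_measure (ennreal lam) (return borel b) = density (return borel b) (\<lambda>_. lam)"
    by (rule measure_eqI) (auto simp: emeasure_density nn_integral_cmult_indicator)
  then show ?thesis
    using assms by (simp add: integral_density integral_return)
qed

lemma levy_measure_singleton_finite:
  assumes "levy_measure \<nu>"
  shows "emeasure \<nu> {b} \<noteq> \<infinity>"
proof (cases "b = 0")
  case True
  then show ?thesis
    using assms by (simp add: levy_measure_def)
next
  case False
  have sets: "{b} \<in> sets \<nu>"
    using assms by (simp add: levy_measure_def)
  have "ennreal (min 1 (b\<^sup>2)) * emeasure \<nu> {b} = (\<integral>\<^sup>+ x. ennreal (min 1 (b\<^sup>2)) * indicator {b} x \<partial>\<nu>)"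
    using sets by (simp add: nn_integral_cmult_indicator)
  also have "\<dots> \<le> (\<integral>\<^sup>+ x. ennreal (min 1 (x\<^sup>2)) \<partial>\<nu>)"
    by (rule nn_integral_mono) (auto split: split_indicator)
  also have "\<dots> < \<infinity>"
    using assms by (simp add: levy_measure_def)
  finally show ?thesis
    using False by (auto simp: ennreal_mult_less_top min_def split: if_splits)
qed

lemma measure_eq_scaled_return:
  assumes sets: "sets M = sets borel" and "AE x in M. x = b" and "emeasure M {b} \<noteq> \<infinity>"
  shows "M = scale_measure (ennreal (measure M {b})) (return borel (b :: real))"
proof (rule measure_eqI)
  fix A assume A: "A \<in> sets M"
  have "emeasure M A = emeasure M (A \<inter> {b})"
    by (rule emeasure_eq_AE) (use assms A in auto)
  also have "\<dots> = ennreal (measure M {b}) * indicator A b"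
    using assms(3) by (cases "b \<in> A") (auto simp: emeasure_eq_ennreal_measure)
  finally show "emeasure M A = emeasure (scale_measure (ennreal (measure M {b})) (return borel b)) A"
    using A sets by simp
qed (use sets in simp)

lemma A1_imp_degenerate:
  assumes "ln r \<noteq> 0" and k: "k \<ge> 1"
    and levy: "levy_measure \<nu>" and moments: "\<forall>p\<ge>0. integrable \<nu> (lk_integrand p)"
    and s: "s \<ge> 0" and \<beta>: "0 < \<beta>" "\<beta> < 1" and A: "A1 r k a s \<nu> \<beta> dinf"
  shows "s = 0" and "AE x in \<nu>. x = ln \<beta> / real k"
proof -
  define K where "K = real k"
  have K: "K > 0"
    using k by (simp add: K_def)
  have integrable: "integrable \<nu> (lk_integrand (real j * K))" for j
    using moments K by simp
  define f where "f x = (exp (K * x) - 1)\<^sup>2 * (exp (K * x) - \<beta>)\<^sup>2" for x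
  have f_nonneg: "f x \<ge> 0" for x
    by (simp add: f_def)
  have "f = (\<lambda>x. lk_integrand (4 * K) x - (2 + 2 * \<beta>) * lk_integrand (3 * K) x
      + (1 + 4 * \<beta> + \<beta>\<^sup>2) * lk_integrand (2 * K) x - (2 * \<beta> + 2 * \<beta>\<^sup>2) * lk_integrand K x)"
    by (simp add: fun_eq_iff f_def lk_integrand_fourth_combination)
  then have f_integrable: "integrable \<nu> f"
    using integrable[of 1] integrable[of 2] integrable[of 3] integrable[of 4] by simp
  have "s * K\<^sup>2 * (1 - \<beta>)\<^sup>2 + (\<integral>x. f x \<partial>\<nu>) = 0"
    using levy_cgf_fourth_combination[of \<nu> K a s \<beta>] A1_cgf_combinations(2)[OF assms(1) A] integrable
    by (simp add: f_def K_def)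
  moreover have "s * K\<^sup>2 * (1 - \<beta>)\<^sup>2 \<ge> 0" "(\<integral>x. f x \<partial>\<nu>) \<ge> 0"
    using s f_nonneg by simp_all
  ultimately have "s * K\<^sup>2 * (1 - \<beta>)\<^sup>2 = 0" and f_integral: "(\<integral>x. f x \<partial>\<nu>) = 0"
    by linarith+
  then show "s = 0"
    using K \<beta> by simp
  have "AE x in \<nu>. f x = 0"
    using f_integral integral_nonneg_eq_0_iff_AE[OF f_integrable] f_nonneg by simp
  moreover have "AE x in \<nu>. x \<noteq> 0"
    using levy by (intro AE_I'[of "{0}"]) (auto simp: levy_measure_def null_sets_def)
  ultimately show "AE x in \<nu>. x = ln \<beta> / real k"
  proof eventually_elim
    case (elim x)
    then have "exp (K * x) = \<beta>"
      using K by (auto simp: f_def)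
    then show ?case
      using K by (auto simp: K_def field_simps)
  qed
qed

lemma A1_imp_log_poisson:
  assumes r: "0 < r" "r < 1" and k: "k \<ge> 1"
    and levy: "levy_measure \<nu>" and moments: "\<forall>p\<ge>0. integrable \<nu> (lk_integrand p)"
    and s: "s \<ge> 0" and \<beta>: "0 < \<beta>" "\<beta> < 1" and A: "A1 r k a s \<nu> \<beta> dinf"
    and intermittent: "delta r k a s \<nu> 0 > dinf"
  shows "s = 0 \<and> (\<exists>b lam. b < 0 \<and> lam > 0 \<and> \<nu> = scale_measure (ennreal lam) (return borel b))"
proof -
  define b where "b = ln \<beta> / real k"
  have ln_r: "ln r < 0"
    using r by simp
  note degenerate = A1_imp_degenerate[OF _ k levy moments s \<beta> A]
  have s0: "s = 0"
    using degenerate(1) ln_r by simp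
  have \<nu>: "\<nu> = scale_measure (ennreal (measure \<nu> {b})) (return borel b)"
    using degenerate(2) ln_r levy levy_measure_singleton_finite
    by (intro measure_eq_scaled_return) (auto simp: levy_measure_def b_def)
  have "0 < ln r * (\<beta> - 1) * (delta r k a s \<nu> 0 - dinf)"
    using ln_r \<beta> intermittent by (simp add: mult_neg_neg)
  also have "\<dots> = s * real k ^ 2 + (\<integral>x. (exp (real k * x) - 1)\<^sup>2 \<partial>\<nu>)"
    using levy_cgf_second_difference[of \<nu> "real k" a s] A1_cgf_combinations(1)[OF _ A] moments ln_r
    by simp
  also have "\<dots> = measure \<nu> {b} * (exp (real k * b) - 1)\<^sup>2"
    using s0 by (subst \<nu>) (simp add: integral_scaled_return)
  finally have "measure \<nu> {b} > 0"
    by (simp add: zero_less_mult_iff)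
  moreover have "b < 0"
    using \<beta> k by (simp add: b_def divide_neg_pos)
  ultimately show ?thesis
    using s0 \<nu> by blast
qed

lemma delta_scaled_return:
  assumes "ln r \<noteq> 0" "lam \<ge> 0"
  shows "delta r k a 0 (scale_measure (ennreal lam) (return borel b)) p
         = (a * k - lam * k * b * indicator {x. \<bar>x\<bar> \<le> 1} b) / ln r
           + lam * (exp (k * b) - 1) / ln r * exp (p * b)"
  using assms
  by (simp add: delta_def zeta_def levy_cgf_def integral_scaled_return lk_integrand_def
      exp_add distrib_right field_simps)

lemma log_poisson_imp_A1:
  assumes r: "0 < r" "r < 1" and k: "k \<ge> 1" and b: "b < 0" and lam: "lam > 0"
  defines "\<nu> \<equiv> scale_measure (ennreal lam) (return borel b)"
  shows "\<exists>\<beta> dinf. 0 < \<beta> \<and> \<beta> < 1 \<and> A1 r k a 0 \<nu> \<beta> dinf \<and>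
           (delta r k a 0 \<nu> 0 - dinf) / (1 - \<beta>) > 0"
proof -
  define \<beta> where "\<beta> = exp (k * b)"
  define dinf where "dinf = (a * k - lam * k * b * indicator {x. \<bar>x\<bar> \<le> 1} b) / ln r"
  define C where "C = lam * (\<beta> - 1) / ln r"
  have ln_r: "ln r < 0"
    using r by simp
  have \<beta>: "0 < \<beta>" "\<beta> < 1"
    using b k by (auto simp: \<beta>_def mult_pos_neg)
  have \<delta>: "delta r k a 0 \<nu> p = dinf + C * exp (p * b)" for p
    unfolding \<nu>_def using delta_scaled_return[of r lam k a b p] ln_r lam
    by (simp add: dinf_def C_def \<beta>_def)
  have "((\<lambda>p. exp (p * b)) \<longlongrightarrow> 0) at_top"
  proof -
    have "filterlim (\<lambda>p. b * p) at_bot at_top"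
      using b by (intro filterlim_tendsto_neg_mult_at_bot[OF tendsto_const] filterlim_ident)
    then show ?thesis
      by (auto intro: filterlim_compose[OF exp_at_bot] simp: mult.commute)
  qed
  then have "(delta r k a 0 \<nu> \<longlongrightarrow> dinf) at_top"
    unfolding \<delta> using tendsto_add[OF tendsto_const tendsto_mult[OF tendsto_const]] by fastforce
  moreover have "delta r k a 0 \<nu> (real (n * k) + real k) = (1 - \<beta>) * dinf + \<beta> * delta r k a 0 \<nu> (real (n * k))"
    for n
    unfolding \<delta> \<beta>_def by (simp add: algebra_simps exp_add)
  moreover have "(delta r k a 0 \<nu> 0 - dinf) / (1 - \<beta>) > 0"
  proof -
    have "lam * (\<beta> - 1) < 0" "ln r * (1 - \<beta>) < 0"
      using \<beta> ln_r lam by (simp_all add: mult_pos_neg mult_neg_pos)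
    then show ?thesis
      by (simp add: \<delta> C_def divide_neg_neg)
  qed
  ultimately show ?thesis
    using \<beta> unfolding A1_def by blast
qed

theorem mainTheorem2:
  fixes r :: real and k :: nat and a \<sigma> :: real and \<nu> :: "real measure"
  assumes r: "0 < r" "r < 1"
    and k: "k \<ge> 1"
    and levy: "levy_measure \<nu>"
    and moments: "\<forall>p\<ge>0. integrable \<nu> (lk_integrand p)"
  shows "(\<exists>\<beta> dinf. 0 < \<beta> \<and> \<beta> < 1 \<and> A1 r k a (\<sigma>\<^sup>2) \<nu> \<beta> dinf \<and>
            (delta r k a (\<sigma>\<^sup>2) \<nu> 0 - dinf) / (1 - \<beta>) > 0)
         \<longleftrightarrow> (\<sigma>\<^sup>2 = 0 \<and> (\<exists>b lam. b < 0 \<and> lam > 0 \<and>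
                 \<nu> = scale_measure (ennreal lam) (return borel b)))"
proof
  assume "\<exists>\<beta> dinf. 0 < \<beta> \<and> \<beta> < 1 \<and> A1 r k a (\<sigma>\<^sup>2) \<nu> \<beta> dinf \<and>
            (delta r k a (\<sigma>\<^sup>2) \<nu> 0 - dinf) / (1 - \<beta>) > 0"
  then obtain \<beta> dinf where \<beta>: "0 < \<beta>" "\<beta> < 1" and "A1 r k a (\<sigma>\<^sup>2) \<nu> \<beta> dinf"
    and "(delta r k a (\<sigma>\<^sup>2) \<nu> 0 - dinf) / (1 - \<beta>) > 0"
    by blast
  moreover from this \<beta> have "delta r k a (\<sigma>\<^sup>2) \<nu> 0 > dinf"
    by (simp add: zero_less_divide_iff)
  ultimately show "\<sigma>\<^sup>2 = 0 \<and> (\<exists>b lam. b < 0 \<and> lam > 0 \<and> \<nu> = scale_measure (ennreal lam) (return borel b))"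
    by (intro A1_imp_log_poisson[OF r k levy moments]) simp_all
next
  assume "\<sigma>\<^sup>2 = 0 \<and> (\<exists>b lam. b < 0 \<and> lam > 0 \<and> \<nu> = scale_measure (ennreal lam) (return borel b))"
  then show "\<exists>\<beta> dinf. 0 < \<beta> \<and> \<beta> < 1 \<and> A1 r k a (\<sigma>\<^sup>2) \<nu> \<beta> dinf \<and>
      (delta r k a (\<sigma>\<^sup>2) \<nu> 0 - dinf) / (1 - \<beta>) > 0"
    using log_poisson_imp_A1[OF r k] by auto
qed

end
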